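(* For a positive integer $m$, let $n=m$, $\mathbf A=\mathbf 0\in\mathbb R^{m\times m}$, $\mathbf c=\mathbf 0$, $\mathbf d=\mathbf e$, and $$\mathcal U=\operatorname{conv}\left(\mathbf 0,\mathbf e_1,\dots,\mathbf e_m,\boldsymbol\nu_1,\dots,\boldsymbol\nu_m\right),\qquad \boldsymbol\nu_i=\tfrac{1}{\sqrt m}(\mathbf e-\mathbf e_i),\ i\in[m].$$ Let $\tilde{\mathbf B}\in\mathbb R_+^{m\times m}$ be the random matrix with $\tilde B_{ii}=1$ and $\tilde B_{ij}=\frac{1}{\sqrt m}\tilde u_{ij}$ for $i\neq j$, where the $\tilde u_{ij}$ ($i\ne j$) are i.i.d. uniform on $[0,1]$. Then with probability at least $1-\frac1m$, $$z_{\sf Aff}(\tilde{\mathbf B})=\Omega(\sqrt m)\cdot z_{\sf AR}(\tilde{\mathbf B}),$$ i.e. there are absolute constants $C>0$ and $m_0$ such that for all $m\ge m_0$, with probability at least $1-\frac1m$, $z_{\sf Aff}(\tilde{\mathbf B})\ge C\sqrt m\, z_{\sf AR}(\tilde{\mathbf B})$.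
   Context: For data $\mathbf A,\mathbf B\in\mathbb R_+^{m\times n}$, $\mathbf c,\mathbf d\in\mathbb R_+^n$ and a compact convex set $\mathcal U\subseteq\mathbb R^m_+$, the two-stage adjustable robust problem is $$z_{\sf AR}(\mathbf B)=\min_{\mathbf x\in\mathbb R^n_+}\ \mathbf c^T\mathbf x+\max_{\mathbf h\in\mathcal U}\ \min_{\mathbf y(\mathbf h)\in\mathbb R^n_+:\ \mathbf A\mathbf x+\mathbf B\mathbf y(\mathbf h)\ge \mathbf h}\ \mathbf d^T\mathbf y(\mathbf h).$$ The affine policy problem $z_{\sf Aff}(\mathbf B)$ is the same problem with the second-stage decision restricted to $\mathbf y(\mathbf h)=\mathbf P\mathbf h+\mathbf q$ for some $\mathbf P\in\mathbb R^{n\times m}$, $\mathbf q\in\mathbb R^n$: it is the minimum over $\mathbf x\in\mathbb R^n_+,\mathbf P,\mathbf q$ of $\mathbf c^T\mathbf x+\max_{\mathbf h\in\mathcal U}\mathbf d^T(\mathbf P\mathbf h+\mathbf q)$ subject to $\mathbf A\mathbf x+\mathbf B(\mathbf P\mathbf h+\mathbf q)\ge\mathbf h$ and $\mathbf P\mathbf h+\mathbf q\ge\mathbf 0$ for all $\mathbf h\in\mathcal U$. $\mathbf e$ is the all-ones vector and $\mathbf e_i$ the $i$-th standard basis vector of $\mathbb R^m$. *)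

theory Defs
  imports "HOL-Probability.Probability"
begin

text \<open>Vectors in R^k are represented as nat => real (only indices < k matter);
  matrices in R^(r x s) as nat => nat => real (only indices < r, < s matter).\<close>

text \<open>Two-stage adjustable robust problem z_AR (with ereal conventions:
  Inf of empty = +infinity, Sup of empty = -infinity).\<close>
definition z_AR ::
  "nat \<Rightarrow> nat \<Rightarrow> (nat \<Rightarrow> nat \<Rightarrow> real) \<Rightarrow> (nat \<Rightarrow> nat \<Rightarrow> real)
   \<Rightarrow> (nat \<Rightarrow> real) \<Rightarrow> (nat \<Rightarrow> real) \<Rightarrow> (nat \<Rightarrow> real) set \<Rightarrow> ereal" where
  "z_AR m n A B c d U =
    (INF x \<in> {x. \<forall>j<n. 0 \<le> x j}.
       ereal (\<Sum>j<n. c j * x j) +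
       (SUP h \<in> U.
          INF y \<in> {y. (\<forall>j<n. 0 \<le> y j) \<and>
                     (\<forall>i<m. (\<Sum>j<n. A i j * x j) + (\<Sum>j<n. B i j * y j) \<ge> h i)}.
             ereal (\<Sum>j<n. d j * y j)))"

definition aff_pol :: "nat \<Rightarrow> (nat \<Rightarrow> nat \<Rightarrow> real) \<Rightarrow> (nat \<Rightarrow> real) \<Rightarrow> (nat \<Rightarrow> real) \<Rightarrow> (nat \<Rightarrow> real)"
  where "aff_pol m P q h = (\<lambda>j. (\<Sum>i<m. P j i * h i) + q j)"

definition z_Aff ::
  "nat \<Rightarrow> nat \<Rightarrow> (nat \<Rightarrow> nat \<Rightarrow> real) \<Rightarrow> (nat \<Rightarrow> nat \<Rightarrow> real)
   \<Rightarrow> (nat \<Rightarrow> real) \<Rightarrow> (nat \<Rightarrow> real) \<Rightarrow> (nat \<Rightarrow> real) set \<Rightarrow> ereal" where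
  "z_Aff m n A B c d U =
    (INF (x, P, q) \<in> {(x, P, q). (\<forall>j<n. 0 \<le> x j) \<and>
        (\<forall>h\<in>U. (\<forall>i<m. (\<Sum>j<n. A i j * x j) + (\<Sum>j<n. B i j * aff_pol m P q h j) \<ge> h i)
               \<and> (\<forall>j<n. 0 \<le> aff_pol m P q h j))}.
       ereal (\<Sum>j<n. c j * x j) + (SUP h \<in> U. ereal (\<Sum>j<n. d j * aff_pol m P q h j)))"

definition conv_pts :: "nat \<Rightarrow> nat \<Rightarrow> (nat \<Rightarrow> nat \<Rightarrow> real) \<Rightarrow> (nat \<Rightarrow> real) set" where
  "conv_pts m N g = {h. \<exists>w. (\<forall>k\<le>N. 0 \<le> w k) \<and> (\<Sum>k\<le>N. w k) = 1 \<and>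
      (\<forall>i<m. h i = (\<Sum>k\<le>N. w k * g k i)) \<and> (\<forall>i\<ge>m. h i = 0)}"

definition unit_vec :: "nat \<Rightarrow> nat \<Rightarrow> real" where
  "unit_vec i = (\<lambda>l. if l = i then 1 else 0)"

text \<open>Generators 0, e_1..e_m, nu_1..nu_m (0-based: index 0 is the origin,
  index k+1 is e_k, index m+k+1 is nu_k, for k < m).\<close>
definition gens3 :: "nat \<Rightarrow> nat \<Rightarrow> nat \<Rightarrow> real" where
  "gens3 m k = (if k = 0 then (\<lambda>_. 0)
                else if k \<le> m then unit_vec (k - 1)
                else (\<lambda>l. (1 - unit_vec (k - m - 1) l) / sqrt (real m)))"

definition U3 :: "nat \<Rightarrow> (nat \<Rightarrow> real) set" where
  "U3 m = conv_pts m (2 * m) (gens3 m)"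

definition offdiag :: "nat \<Rightarrow> (nat \<times> nat) set" where
  "offdiag m = {(i, j). i < m \<and> j < m \<and> i \<noteq> j}"

definition U_space :: "nat \<Rightarrow> (nat \<times> nat \<Rightarrow> real) measure" where
  "U_space m = PiM (offdiag m) (\<lambda>_. uniform_measure lborel {0..1::real})"

definition B_tilde :: "nat \<Rightarrow> (nat \<times> nat \<Rightarrow> real) \<Rightarrow> nat \<Rightarrow> nat \<Rightarrow> real" where
  "B_tilde m u = (\<lambda>i j. if i = j then 1 else u (i, j) / sqrt (real m))"

end

theory Submission
  imports Defs
begin

text \<open>
  Every point of \<open>\<U>\<close> is dominated by \<open>a + (b / \<surd>m) e\<close> with \<open>a, b \<ge> 0\<close> and
  \<open>\<Sum>a + b \<le> 1\<close>. If every row of \<open>B\<close> has sum \<open>\<ge> (m - 1) / (4 \<surd>m)\<close>, the fully adjustable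
  answer \<open>y = a + (4 b / (m - 1)) e\<close> covers such a point at cost at most 8, so \<open>z\<^sub>A\<^sub>R \<le> 8\<close>.
  An affine policy \<open>y(h) = P h + q\<close> is evaluated at the vertices \<open>e\<^sub>k\<close> and \<open>\<nu>\<^sub>k\<close>: as the
  off-diagonal entries of \<open>B\<close> are at most \<open>1 / \<surd>m\<close>, covering \<open>e\<^sub>k\<close> forces
  \<open>P\<^sub>k\<^sub>k + q\<^sub>k \<ge> 1 - z / \<surd>m\<close> for the worst-case cost \<open>z\<close>, while summing the costs and the
  nonnegativity constraints at all \<open>e\<^sub>k\<close>, \<open>\<nu>\<^sub>k\<close> gives \<open>tr P + \<Sum>q \<le> (\<surd>m + 1) z\<close>; hence
  \<open>z \<ge> m / (2 \<surd>m + 1)\<close>. For the random matrix the entry bounds hold almost surely, and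
  Hoeffding's inequality with a union bound over the rows gives the row sums with
  probability at least \<open>1 - m exp (-(m - 1) / 8) \<ge> 1 - 1 / m\<close>.
\<close>

lemma sum_atMost_double_split:
  fixes f :: "nat \<Rightarrow> 'a::comm_monoid_add"
  shows "(\<Sum>k\<le>2*m. f k) = f 0 + (\<Sum>l<m. f (l + 1)) + (\<Sum>l<m. f (m + l + 1))"
proof -
  have shift: "(\<Sum>k<a + b. g k) = (\<Sum>k<a. g k) + (\<Sum>k<b. g (a + k))" for a b and g :: "nat \<Rightarrow> 'a"
    by (induction b) (simp_all add: add.assoc)
  have "{..2*m} = {..<Suc (m + m)}"
    by auto
  then have "(\<Sum>k\<le>2*m. f k) = f 0 + (\<Sum>k<m + m. f (Suc k))"
    by (simp only: sum.lessThan_Suc_shift)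
  also have "\<dots> = f 0 + (\<Sum>l<m. f (l + 1)) + (\<Sum>l<m. f (m + l + 1))"
    by (simp add: shift add.assoc)
  finally show ?thesis .
qed

lemma conv_pts_vertex:
  assumes "k \<le> N"
  shows "(\<lambda>i. if i < m then g k i else 0) \<in> conv_pts m N g"
proof -
  define w :: "nat \<Rightarrow> real" where "w = (\<lambda>l. if l = k then 1 else 0)"
  have "(\<Sum>l\<le>N. w l * g l i) = (\<Sum>l\<le>N. if l = k then g l i else 0)" for i
    by (rule sum.cong) (auto simp: w_def)
  then have "(\<Sum>l\<le>N. w l * g l i) = g k i" for i
    using assms by simp
  moreover have "(\<Sum>l\<le>N. w l) = 1"
    using assms by (simp add: w_def)
  ultimately show ?thesis
    unfolding conv_pts_def by (intro CollectI exI[of _ w]) (auto simp: w_def)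
qed

lemma zero_in_U3: "(\<lambda>_. 0) \<in> U3 m"
proof -
  have "(\<lambda>_. 0) = (\<lambda>i. if i < m then gens3 m 0 i else 0)"
    by (auto simp: gens3_def)
  then show ?thesis
    using conv_pts_vertex[of 0 "2*m" m "gens3 m"] by (simp add: U3_def)
qed

lemma unit_vec_in_U3:
  assumes "k < m"
  shows "unit_vec k \<in> U3 m"
proof -
  have "unit_vec k = (\<lambda>i. if i < m then gens3 m (k + 1) i else 0)"
    using assms by (auto simp: gens3_def unit_vec_def)
  then show ?thesis
    using assms conv_pts_vertex[of "k + 1" "2*m" m "gens3 m"] by (simp add: U3_def)
qed

lemma nu_in_U3:
  assumes "k < m"
  shows "(\<lambda>i. if i < m then (1 - unit_vec k i) / sqrt (real m) else 0) \<in> U3 m"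
proof -
  have "(\<lambda>i. if i < m then (1 - unit_vec k i) / sqrt (real m) else 0)
      = (\<lambda>i. if i < m then gens3 m (m + k + 1) i else 0)"
    by (auto simp: gens3_def)
  then show ?thesis
    using assms conv_pts_vertex[of "m + k + 1" "2*m" m "gens3 m"] by (simp add: U3_def)
qed

lemma U3_dominated:
  assumes "h \<in> U3 m"
  obtains a b where "\<forall>k<m. 0 \<le> a k" "0 \<le> b" "(\<Sum>k<m. a k) + b \<le> 1"
    "\<forall>i<m. h i \<le> a i + b / sqrt (real m)"
proof -
  obtain w where w0: "\<forall>k\<le>2*m. 0 \<le> w k" and w1: "(\<Sum>k\<le>2*m. w k) = 1"
    and hw: "\<forall>i<m. h i = (\<Sum>k\<le>2*m. w k * gens3 m k i)"
    using assms unfolding U3_def conv_pts_def by blast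
  define b where "b = (\<Sum>l<m. w (m + l + 1))"
  show thesis
  proof (rule that[of "\<lambda>k. w (k + 1)" b])
    show "\<forall>k<m. 0 \<le> w (k + 1)" "0 \<le> b"
      using w0 by (auto simp: b_def intro!: sum_nonneg)
    show "(\<Sum>k<m. w (k + 1)) + b \<le> 1"
      using w1 w0[rule_format, of 0] sum_atMost_double_split[of w m] by (simp add: b_def)
    show "\<forall>i<m. h i \<le> w (i + 1) + b / sqrt (real m)"
    proof (intro allI impI)
      fix i assume i: "i < m"
      have "gens3 m 0 i = 0"
        by (simp add: gens3_def)
      then have "h i = (\<Sum>l<m. w (l + 1) * gens3 m (l + 1) i)
          + (\<Sum>l<m. w (m + l + 1) * gens3 m (m + l + 1) i)"
        using hw i sum_atMost_double_split[of "\<lambda>k. w k * gens3 m k i" m] by simp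
      also have "(\<Sum>l<m. w (l + 1) * gens3 m (l + 1) i) = w (i + 1)"
        using i by (simp add: gens3_def unit_vec_def if_distrib sum.delta cong: if_cong)
      also have "(\<Sum>l<m. w (m + l + 1) * gens3 m (m + l + 1) i) \<le> (\<Sum>l<m. w (m + l + 1) / sqrt (real m))"
        using w0 by (intro sum_mono) (auto simp: gens3_def unit_vec_def)
      finally show "h i \<le> w (i + 1) + b / sqrt (real m)"
        by (simp add: b_def sum_divide_distrib)
    qed
  qed
qed

lemma z_AR_le:
  assumes x: "\<forall>j<n. 0 \<le> x j"
    and policy: "\<And>h. h \<in> U \<Longrightarrow> \<exists>y. (\<forall>j<n. 0 \<le> y j) \<and>
      (\<forall>i<m. h i \<le> (\<Sum>j<n. A i j * x j) + (\<Sum>j<n. B i j * y j)) \<and> (\<Sum>j<n. d j * y j) \<le> v"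
  shows "z_AR m n A B c d U \<le> ereal (\<Sum>j<n. c j * x j) + ereal v"
  unfolding z_AR_def
proof (rule INF_lower2[of x])
  show "x \<in> {x. \<forall>j<n. 0 \<le> x j}"
    using x by simp
  show "ereal (\<Sum>j<n. c j * x j) + (SUP h\<in>U. INF y\<in>{y. (\<forall>j<n. 0 \<le> y j) \<and>
      (\<forall>i<m. h i \<le> (\<Sum>j<n. A i j * x j) + (\<Sum>j<n. B i j * y j))}. ereal (\<Sum>j<n. d j * y j))
    \<le> ereal (\<Sum>j<n. c j * x j) + ereal v"
  proof (intro add_left_mono SUP_least)
    fix h assume "h \<in> U"
    then obtain y where "(\<forall>j<n. 0 \<le> y j) \<and>
        (\<forall>i<m. h i \<le> (\<Sum>j<n. A i j * x j) + (\<Sum>j<n. B i j * y j))" "(\<Sum>j<n. d j * y j) \<le> v"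
      using policy by blast
    then show "(INF y\<in>{y. (\<forall>j<n. 0 \<le> y j) \<and>
        (\<forall>i<m. h i \<le> (\<Sum>j<n. A i j * x j) + (\<Sum>j<n. B i j * y j))}. ereal (\<Sum>j<n. d j * y j))
      \<le> ereal v"
      by (intro INF_lower2[of y]) auto
  qed
qed

lemma z_AR_U3_le:
  assumes m: "m \<ge> 2"
    and diag: "\<And>i. i < m \<Longrightarrow> B i i = 1"
    and nonneg: "\<And>i j. i < m \<Longrightarrow> j < m \<Longrightarrow> 0 \<le> B i j"
    and row: "\<And>i. i < m \<Longrightarrow> (real m - 1) / (4 * sqrt (real m)) \<le> (\<Sum>j<m. B i j)"
  shows "z_AR m m (\<lambda>_ _. 0) B (\<lambda>_. 0) (\<lambda>_. 1) (U3 m) \<le> 8"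
proof -
  define s where "s = sqrt (real m)"
  define \<sigma> where "\<sigma> = 4 / (real m - 1)"
  have s: "s > 0" and m1: "real m - 1 > 0"
    using m by (simp_all add: s_def)
  have \<sigma>: "\<sigma> \<ge> 0" "\<sigma> * ((real m - 1) / (4 * s)) = 1 / s" "real m * \<sigma> \<le> 8"
    using m1 s m by (simp_all add: \<sigma>_def field_simps)
  have "\<exists>y. (\<forall>j<m. 0 \<le> y j) \<and> (\<forall>i<m. h i \<le> (\<Sum>j<m. 0 * 0) + (\<Sum>j<m. B i j * y j))
      \<and> (\<Sum>j<m. 1 * y j) \<le> 8" if hU: "h \<in> U3 m" for h
  proof -
    obtain a b where a: "\<forall>k<m. 0 \<le> a k" and b: "0 \<le> b" and ab: "(\<Sum>k<m. a k) + b \<le> 1"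
      and h: "\<forall>i<m. h i \<le> a i + b / s"
      using U3_dominated[OF hU] unfolding s_def by blast
    \<comment> \<open>The mass \<open>b\<close> on the points \<open>\<nu>\<^sub>k\<close> is covered by spreading \<open>\<sigma> b\<close> over all coordinates.\<close>
    define y where "y j = a j + \<sigma> * b" for j
    have "h i \<le> (\<Sum>j<m. B i j * y j)" if i: "i < m" for i
    proof -
      have "a i \<le> (\<Sum>j<m. B i j * a j)"
        using i a diag[OF i] member_le_sum[of i "{..<m}" "\<lambda>j. B i j * a j"]
        by (auto intro: mult_nonneg_nonneg nonneg)
      moreover have "b / s \<le> \<sigma> * b * (\<Sum>j<m. B i j)"
      proof -
        have "b / s = \<sigma> * b * ((real m - 1) / (4 * s))"
          using \<sigma>(2) by (metis mult.commute mult.left_commute times_divide_eq_right mult.right_neutral)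
        also have "\<dots> \<le> \<sigma> * b * (\<Sum>j<m. B i j)"
          using row[OF i] \<sigma>(1) b by (intro mult_left_mono) (simp_all add: s_def)
        finally show ?thesis .
      qed
      moreover have "(\<Sum>j<m. B i j * y j) = (\<Sum>j<m. B i j * a j) + \<sigma> * b * (\<Sum>j<m. B i j)"
        by (simp add: y_def distrib_left sum.distrib sum_distrib_left mult_ac)
      ultimately show ?thesis
        using h i by fastforce
    qed
    moreover have "(\<Sum>j<m. y j) \<le> 8"
    proof -
      have "(\<Sum>j<m. y j) = (\<Sum>j<m. a j) + real m * \<sigma> * b"
        by (simp add: y_def sum.distrib)
      moreover have "real m * \<sigma> * b \<le> 8 * b"
        using \<sigma>(3) b by (rule mult_right_mono)
      moreover have "0 \<le> (\<Sum>k<m. a k)"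
        using a by (auto intro: sum_nonneg)
      ultimately show ?thesis
        using ab by linarith
    qed
    ultimately show ?thesis
      using a b \<sigma>(1) by (intro exI[of _ y]) (simp add: y_def)
  qed
  then have "z_AR m m (\<lambda>_ _. 0) B (\<lambda>_. 0) (\<lambda>_. 1) (U3 m) \<le> ereal (\<Sum>j<m. 0 * 0) + ereal 8"
    by (intro z_AR_le) auto
  then show ?thesis
    by simp
qed

lemma z_Aff_ge:
  assumes "U \<noteq> {}"
    and bound: "\<And>x P q z. \<forall>j<n. 0 \<le> x j \<Longrightarrow>
      \<forall>h\<in>U. (\<forall>i<m. h i \<le> (\<Sum>j<n. A i j * x j) + (\<Sum>j<n. B i j * aff_pol m P q h j))
        \<and> (\<forall>j<n. 0 \<le> aff_pol m P q h j) \<Longrightarrow>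
      \<forall>h\<in>U. (\<Sum>j<n. d j * aff_pol m P q h j) \<le> z \<Longrightarrow> v \<le> (\<Sum>j<n. c j * x j) + z"
  shows "ereal v \<le> z_Aff m n A B c d U"
  unfolding z_Aff_def
proof (rule INF_greatest, clarify)
  fix x P q
  assume x: "\<forall>j<n. 0 \<le> x j"
    and feasible: "\<forall>h\<in>U. (\<forall>i<m. h i \<le> (\<Sum>j<n. A i j * x j) + (\<Sum>j<n. B i j * aff_pol m P q h j))
        \<and> (\<forall>j<n. 0 \<le> aff_pol m P q h j)"
  define Z where "Z = (SUP h\<in>U. ereal (\<Sum>j<n. d j * aff_pol m P q h j))"
  have upper: "ereal (\<Sum>j<n. d j * aff_pol m P q h j) \<le> Z" if "h \<in> U" for h
    unfolding Z_def using that by (rule SUP_upper)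
  show "ereal v \<le> ereal (\<Sum>j<n. c j * x j) + Z"
  proof (cases Z)
    case (real z)
    then have "v \<le> (\<Sum>j<n. c j * x j) + z"
      using upper by (intro bound[OF x feasible]) auto
    then show ?thesis
      using real by simp
  next
    case MInf
    then show ?thesis
      using upper \<open>U \<noteq> {}\<close> by force
  qed simp
qed

lemma aff_pol_unit_vec:
  assumes "k < m"
  shows "aff_pol m P q (unit_vec k) = (\<lambda>j. P j k + q j)"
proof
  fix j
  have "(\<Sum>i<m. P j i * unit_vec k i) = (\<Sum>i<m. if i = k then P j i else 0)"
    by (rule sum.cong) (auto simp: unit_vec_def)
  then show "aff_pol m P q (unit_vec k) j = P j k + q j"
    using assms by (simp add: aff_pol_def)
qed

lemma aff_pol_nu:
  assumes "k < m"
  shows "aff_pol m P q (\<lambda>i. if i < m then (1 - unit_vec k i) / s else 0)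
    = (\<lambda>j. ((\<Sum>i<m. P j i) - P j k) / s + q j)"
proof
  fix j
  have "(\<Sum>i<m. P j i * (if i < m then (1 - unit_vec k i) / s else 0))
      = (\<Sum>i<m. P j i / s - (if i = k then P j i / s else 0))"
    by (rule sum.cong) (auto simp: unit_vec_def diff_divide_distrib)
  then show "aff_pol m P q (\<lambda>i. if i < m then (1 - unit_vec k i) / s else 0) j
      = ((\<Sum>i<m. P j i) - P j k) / s + q j"
    using assms by (simp add: aff_pol_def sum_subtractf sum_divide_distrib diff_divide_distrib)
qed

lemma covered_unit_vec_diag_lower:
  fixes B :: "nat \<Rightarrow> nat \<Rightarrow> real" and y :: "nat \<Rightarrow> real"
  assumes k: "k < m" and "w > 0"
    and diag: "B k k = 1" and offdiag: "\<And>j. j < m \<Longrightarrow> j \<noteq> k \<Longrightarrow> B k j \<le> 1 / w"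
    and y: "\<forall>j<m. 0 \<le> y j" and cover: "1 \<le> (\<Sum>j<m. B k j * y j)" and cost: "(\<Sum>j<m. y j) \<le> z"
  shows "1 \<le> y k + z / w"
proof -
  have "(\<Sum>j<m. B k j * y j) \<le> (\<Sum>j<m. (if j = k then y j else 0) + y j / w)"
  proof (rule sum_mono)
    fix j assume "j \<in> {..<m}"
    then show "B k j * y j \<le> (if j = k then y j else 0) + y j / w"
      using diag offdiag[of j] y \<open>w > 0\<close> mult_right_mono[of "B k j" "1 / w" "y j"] by auto
  qed
  also have "\<dots> = y k + (\<Sum>j<m. y j) / w"
    using k by (simp add: sum.distrib sum_divide_distrib)
  also have "\<dots> \<le> y k + z / w"
    using cost \<open>w > 0\<close> by (simp add: divide_right_mono)
  finally show ?thesis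
    using cover by linarith
qed

lemma affine_aggregates_bound:
  fixes m w z T D Q :: real
  assumes w: "w > 0" "m = w * w"
    and unit_costs: "T + m * Q \<le> m * z"
    and nu_costs: "(m * T - T) / w + m * Q \<le> m * z"
    and nu_nonneg: "0 \<le> (T - D) / w + Q"
    and diag: "m \<le> D + Q + m * (z / w)"
  shows "m \<le> (2 * w + 1) * z"
proof -
  have m: "m > 0"
    using w by simp
  have "m * T - T + m * w * Q = w * ((m * T - T) / w + m * Q)"
    using w(1) by (simp add: field_simps)
  also have "\<dots> \<le> w * (m * z)"
    using nu_costs w(1) by simp
  finally have "m * T - T + m * w * Q \<le> m * w * z"
    by (simp add: mult_ac)
  with unit_costs have "m * (T + w * Q) \<le> m * ((w + 1) * z - Q)"
    by (simp add: algebra_simps)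
  then have "T + w * Q \<le> (w + 1) * z - Q"
    using m by simp
  moreover have "D \<le> T + w * Q"
    using nu_nonneg w(1) by (simp add: field_simps)
  moreover have "m * (z / w) = w * z"
    using w by simp
  ultimately show ?thesis
    using diag by (simp add: algebra_simps)
qed

context
  fixes m :: nat and B P :: "nat \<Rightarrow> nat \<Rightarrow> real" and q :: "nat \<Rightarrow> real" and z :: real
  assumes feasible: "\<forall>h\<in>U3 m. (\<forall>i<m. h i \<le> (\<Sum>j<m. B i j * aff_pol m P q h j))
      \<and> (\<forall>j<m. 0 \<le> aff_pol m P q h j)"
    and cost: "\<forall>h\<in>U3 m. (\<Sum>j<m. aff_pol m P q h j) \<le> z"
begin

lemma affine_policy_at_unit_vec:
  assumes k: "k < m"
  shows "\<forall>i<m. unit_vec k i \<le> (\<Sum>j<m. B i j * (P j k + q j))" "\<forall>j<m. 0 \<le> P j k + q j"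
    "(\<Sum>j<m. P j k + q j) \<le> z"
  using feasible[rule_format, OF unit_vec_in_U3[OF k]] cost[rule_format, OF unit_vec_in_U3[OF k]]
  by (simp_all add: aff_pol_unit_vec[OF k])

lemma affine_policy_at_nu:
  assumes k: "k < m"
  shows "0 \<le> ((\<Sum>i<m. P k i) - P k k) / sqrt (real m) + q k"
    "(\<Sum>j<m. ((\<Sum>i<m. P j i) - P j k) / sqrt (real m) + q j) \<le> z"
proof -
  let ?\<nu> = "\<lambda>i. if i < m then (1 - unit_vec k i) / sqrt (real m) else 0"
  have "aff_pol m P q ?\<nu> = (\<lambda>j. ((\<Sum>i<m. P j i) - P j k) / sqrt (real m) + q j)"
    by (rule aff_pol_nu[OF k])
  then show "0 \<le> ((\<Sum>i<m. P k i) - P k k) / sqrt (real m) + q k"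
      "(\<Sum>j<m. ((\<Sum>i<m. P j i) - P j k) / sqrt (real m) + q j) \<le> z"
    using feasible[rule_format, OF nu_in_U3[OF k]] cost[rule_format, OF nu_in_U3[OF k]] k
    by simp_all
qed

lemma affine_policy_U3_cost_lower:
  assumes m: "m \<ge> 1"
    and diag: "\<And>i. i < m \<Longrightarrow> B i i = 1"
    and offdiag: "\<And>i j. i < m \<Longrightarrow> j < m \<Longrightarrow> i \<noteq> j \<Longrightarrow> B i j \<le> 1 / sqrt (real m)"
  shows "real m \<le> (2 * sqrt (real m) + 1) * z"
proof -
  define w where "w = sqrt (real m)"
  define T where "T = (\<Sum>k<m. \<Sum>j<m. P j k)"
  define D where "D = (\<Sum>k<m. P k k)"
  define Q where "Q = (\<Sum>j<m. q j)"
  have w: "w > 0" "real m = w * w"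
    using m by (simp_all add: w_def)
  have T_swap: "(\<Sum>j<m. \<Sum>i<m. P j i) = T"
    unfolding T_def by (rule sum.swap)
  have "(\<Sum>k<m. \<Sum>j<m. P j k + q j) \<le> (\<Sum>k<m. z)"
    using affine_policy_at_unit_vec(3) by (intro sum_mono) simp
  then have unit_costs: "T + real m * Q \<le> real m * z"
    by (simp add: T_def Q_def sum.distrib)
  have "(\<Sum>k<m. \<Sum>j<m. ((\<Sum>i<m. P j i) - P j k) / w + q j) \<le> (\<Sum>k<m. z)"
    using affine_policy_at_nu(2) by (intro sum_mono) (simp add: w_def)
  then have nu_costs: "(real m * T - T) / w + real m * Q \<le> real m * z"
    by (simp add: sum.distrib sum_subtractf sum_divide_distrib[symmetric] T_swap Q_def T_def)
  have "0 \<le> (\<Sum>k<m. ((\<Sum>i<m. P k i) - P k k) / w + q k)"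
    using affine_policy_at_nu(1) by (intro sum_nonneg) (simp add: w_def)
  then have nu_nonneg: "0 \<le> (T - D) / w + Q"
    by (simp add: sum.distrib sum_subtractf sum_divide_distrib[symmetric] T_swap D_def Q_def)
  have "1 \<le> (P k k + q k) + z / w" if k: "k < m" for k
  proof (rule covered_unit_vec_diag_lower[where B = B and y = "\<lambda>j. P j k + q j", OF k w(1) diag[OF k]])
    show "\<And>j. j < m \<Longrightarrow> j \<noteq> k \<Longrightarrow> B k j \<le> 1 / w"
      using offdiag k by (simp add: w_def)
    show "1 \<le> (\<Sum>j<m. B k j * (P j k + q j))"
      using affine_policy_at_unit_vec(1)[OF k] k by (force simp: unit_vec_def)
  qed (use affine_policy_at_unit_vec(2,3)[OF k] in auto)
  then have "(\<Sum>k<m. 1) \<le> (\<Sum>k<m. (P k k + q k) + z / w)"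
    by (intro sum_mono) simp
  then have diag_sum: "real m \<le> D + Q + real m * (z / w)"
    by (simp add: sum.distrib D_def Q_def)
  show ?thesis
    using affine_aggregates_bound[OF w unit_costs nu_costs nu_nonneg diag_sum]
    by (simp add: w_def)
qed

end

lemma z_Aff_U3_ge:
  assumes m: "m \<ge> 1"
    and diag: "\<And>i. i < m \<Longrightarrow> B i i = 1"
    and offdiag: "\<And>i j. i < m \<Longrightarrow> j < m \<Longrightarrow> i \<noteq> j \<Longrightarrow> B i j \<le> 1 / sqrt (real m)"
  shows "ereal (real m / (2 * sqrt (real m) + 1)) \<le> z_Aff m m (\<lambda>_ _. 0) B (\<lambda>_. 0) (\<lambda>_. 1) (U3 m)"
proof (rule z_Aff_ge)
  show "U3 m \<noteq> {}"
    using zero_in_U3 by blast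
  fix x P q z
  assume "\<forall>h\<in>U3 m. (\<forall>i<m. h i \<le> (\<Sum>j<m. 0 * x j) + (\<Sum>j<m. B i j * aff_pol m P q h j))
      \<and> (\<forall>j<m. 0 \<le> aff_pol m P q h j)"
    and "\<forall>h\<in>U3 m. (\<Sum>j<m. 1 * aff_pol m P q h j) \<le> z"
  then have "real m \<le> (2 * sqrt (real m) + 1) * z"
    by (intro affine_policy_U3_cost_lower[OF _ _ m diag offdiag]) auto
  moreover have "0 < 2 * sqrt (real m) + 1"
    using real_sqrt_ge_zero[of "real m"] by linarith
  ultimately show "real m / (2 * sqrt (real m) + 1) \<le> (\<Sum>j<m. 0 * x j) + z"
    by (simp add: pos_divide_le_eq mult.commute)
qed

lemma z_Aff_ge_sqrt_mult_z_AR: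
  assumes m: "m \<ge> 2"
    and diag: "\<And>i. i < m \<Longrightarrow> B i i = 1"
    and nonneg: "\<And>i j. i < m \<Longrightarrow> j < m \<Longrightarrow> 0 \<le> B i j"
    and offdiag: "\<And>i j. i < m \<Longrightarrow> j < m \<Longrightarrow> i \<noteq> j \<Longrightarrow> B i j \<le> 1 / sqrt (real m)"
    and row: "\<And>i. i < m \<Longrightarrow> (real m - 1) / (4 * sqrt (real m)) \<le> (\<Sum>j<m. B i j)"
  shows "ereal (sqrt (real m) / 24) * z_AR m m (\<lambda>_ _. 0) B (\<lambda>_. 0) (\<lambda>_. 1) (U3 m)
    \<le> z_Aff m m (\<lambda>_ _. 0) B (\<lambda>_. 0) (\<lambda>_. 1) (U3 m)"
proof -
  have "ereal (sqrt (real m) / 24) * z_AR m m (\<lambda>_ _. 0) B (\<lambda>_. 0) (\<lambda>_. 1) (U3 m)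
      \<le> ereal (sqrt (real m) / 24) * 8"
    using z_AR_U3_le[OF m diag nonneg row] by (rule ereal_mult_left_mono) auto
  also have "\<dots> = ereal (sqrt (real m) / 3)"
    by simp
  also have "\<dots> \<le> ereal (real m / (2 * sqrt (real m) + 1))"
  proof -
    have "sqrt (real m) \<le> real m"
      using m by (simp add: real_sqrt_le_iff' power2_eq_square)
    moreover have "sqrt (real m) * (2 * sqrt (real m) + 1) = 2 * (sqrt (real m))\<^sup>2 + sqrt (real m)"
      by (simp add: power2_eq_square algebra_simps)
    ultimately have "sqrt (real m) * (2 * sqrt (real m) + 1) \<le> 3 * real m"
      by simp
    moreover have "0 < 2 * sqrt (real m) + 1"
      using real_sqrt_ge_zero[of "real m"] by linarith
    ultimately show ?thesis
      by (simp add: field_simps)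
  qed
  also have "\<dots> \<le> z_Aff m m (\<lambda>_ _. 0) B (\<lambda>_. 0) (\<lambda>_. 1) (U3 m)"
    using m by (intro z_Aff_U3_ge diag offdiag) auto
  finally show ?thesis .
qed

lemma indep_vars_PiM_component:
  assumes M: "\<And>i. i \<in> I \<Longrightarrow> prob_space (M i)"
    and sets_eq: "\<And>i. i \<in> I \<Longrightarrow> sets (M i) = sets (N i)"
  shows "prob_space.indep_vars (PiM I M) N (\<lambda>i x. x i) I"
proof -
  interpret prob_space "PiM I M"
    using M by (rule prob_space_PiM)
  show ?thesis
  proof (cases "I = {}")
    case True
    show ?thesis
      unfolding indep_vars_def indep_sets_def using True by simp
  next
    case False
    have "distr (PiM I M) (PiM I N) (\<lambda>x. \<lambda>i\<in>I. x i) = distr (PiM I M) (PiM I M) (\<lambda>x. x)"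
      using sets_eq by (intro distr_cong sets_PiM_cong)
        (auto simp: space_PiM PiE_def extensional_def restrict_def fun_eq_iff)
    also have "\<dots> = PiM I (\<lambda>i. distr (PiM I M) (N i) (\<lambda>x. x i))"
    proof -
      have "distr (PiM I M) (N i) (\<lambda>x. x i) = M i" if "i \<in> I" for i
        using that M sets_eq distr_PiM_component[of I M i]
        by (metis distr_cong)
      then show ?thesis
        by (auto intro!: PiM_cong)
    qed
    finally show ?thesis
      using False sets_eq
      by (subst indep_vars_iff_distr_eq_PiM')
        (auto simp: measurable_cong_sets[OF refl sets_eq[symmetric]])
  qed
qed

lemma expectation_uniform_unit_interval:
  "prob_space.expectation (uniform_measure lborel {0..1::real}) (\<lambda>x. x) = 1 / 2"
proof -
  interpret prob_space "uniform_measure lborel {0..1::real}"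
    by (intro prob_space_uniform_measure) auto
  have "distributed (uniform_measure lborel {0..1::real}) lborel (\<lambda>x. x)
      (\<lambda>x. indicator {0..1} x / measure lborel {0..1::real})"
  proof (rule uniform_distrI_borel_atLeastAtMost)
    fix t :: real assume "0 \<le> t" "t \<le> 1"
    moreover have "{x \<in> space (uniform_measure lborel {0..1}). x \<le> t} = {..t}"
      by auto
    ultimately show "prob {x \<in> space (uniform_measure lborel {0..1}). x \<le> t} = (t - 0) / (1 - 0)"
      by simp
  qed (simp_all add: measurable_cong_sets[OF sets_uniform_measure refl])
  from uniform_distributed_expectation[OF this] show ?thesis
    by simp
qed

lemma PiM_uniform_sum_lower_tail:
  fixes I J :: "'i set"
  defines "M \<equiv> PiM I (\<lambda>_. uniform_measure lborel {0..1::real})"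
  assumes J: "finite J" "J \<noteq> {}" "J \<subseteq> I"
  shows "measure M {x \<in> space M. (\<Sum>p\<in>J. x p) \<le> real (card J) / 4} \<le> exp (- real (card J) / 8)"
proof -
  have unif: "prob_space (uniform_measure lborel {0..1::real})"
    by (intro prob_space_uniform_measure) auto
  interpret prob_space M
    unfolding M_def using unif by (rule prob_space_PiM)
  have component: "distr M (uniform_measure lborel {0..1}) (\<lambda>x. x p) = uniform_measure lborel {0..1}"
    if "p \<in> I" for p
    unfolding M_def using unif that by (intro distr_PiM_component)
  have component_measurable: "(\<lambda>x. x p) \<in> M \<rightarrow>\<^sub>M uniform_measure lborel {0..1}" if "p \<in> I" for p
    unfolding M_def using that by (rule measurable_component_singleton)
  interpret Hoeffding_ineq M J "\<lambda>p x. x p" "\<lambda>_. 0" "\<lambda>_. 1" "real (card J) / 2"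
  proof unfold_locales
    show "finite J"
      by (rule J(1))
    have "indep_vars (\<lambda>_. borel) (\<lambda>p x. x p) I"
      unfolding M_def using unif by (intro indep_vars_PiM_component) auto
    then show "indep_vars (\<lambda>_. borel) (\<lambda>p x. x p) J"
      using J(3) by (rule indep_vars_subset)
    show "AE x in M. x p \<in> {0..1}" if "p \<in> J" for p
      unfolding M_def using that J(3) by (intro AE_PiM_component unif AE_uniform_measureI) auto
    have mean: "expectation (\<lambda>x. x p) = 1 / 2" if "p \<in> J" for p
    proof -
      have "expectation (\<lambda>x. x p)
          = integral\<^sup>L (distr M (uniform_measure lborel {0..1}) (\<lambda>x. x p)) (\<lambda>x. x)"
        using component_measurable[of p] that J(3)
        by (subst integral_distr) (auto simp: measurable_cong_sets[OF sets_uniform_measure refl])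
      then show ?thesis
        using component[of p] that J(3) expectation_uniform_unit_interval by auto
    qed
    have "(\<Sum>p\<in>J. expectation (\<lambda>x. x p)) = (\<Sum>p\<in>J. 1 / 2)"
      using mean by (rule sum.cong[OF refl])
    then have "real (card J) / 2 = (\<Sum>p\<in>J. expectation (\<lambda>x. x p))"
      by simp
    then show "real (card J) / 2 \<equiv> (\<Sum>p\<in>J. expectation (\<lambda>x. x p))"
      by (rule eq_reflection)
  qed
  have "card J > 0"
    using J by (simp add: card_gt_0_iff)
  have "prob {x \<in> space M. (\<Sum>p\<in>J. x p) \<le> real (card J) / 2 - real (card J) / 4}
      \<le> exp (-2 * (real (card J) / 4)\<^sup>2 / (\<Sum>p\<in>J. (1 - 0)\<^sup>2))"
    using \<open>card J > 0\<close> by (intro Hoeffding_ineq_le) (simp_all add: card_gt_0_iff)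
  also have "\<dots> = exp (- real (card J) / 8)"
    using \<open>card J > 0\<close> by (simp add: power2_eq_square)
  finally show ?thesis
    by simp
qed

lemma U_space_row_lower_tail:
  assumes "i < m" "m \<ge> 2"
  shows "measure (U_space m) {x \<in> space (U_space m). (\<Sum>j\<in>{..<m} - {i}. x (i, j)) \<le> (real m - 1) / 4}
    \<le> exp (- (real m - 1) / 8)"
proof -
  define J where "J = Pair i ` ({..<m} - {i})"
  have inj: "inj_on (Pair i) ({..<m} - {i})"
    by (auto simp: inj_on_def)
  have card: "real (card J) = real m - 1"
    using assms by (simp add: J_def card_image[OF inj] of_nat_diff)
  have "(if i = 0 then 1 else 0) \<in> {..<m} - {i}"
    using assms by auto
  then have "J \<subseteq> offdiag m" "finite J" "J \<noteq> {}"
    using assms by (auto simp: J_def offdiag_def)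
  moreover have "(\<Sum>p\<in>J. x p) = (\<Sum>j\<in>{..<m} - {i}. x (i, j))" for x :: "nat \<times> nat \<Rightarrow> real"
    by (simp add: J_def sum.reindex[OF inj])
  ultimately show ?thesis
    using PiM_uniform_sum_lower_tail[of J "offdiag m"] card by (simp add: U_space_def)
qed

lemma square_le_exp_eighth:
  fixes x :: real
  assumes "x \<ge> 13824"
  shows "x * x \<le> exp ((x - 1) / 8)"
proof -
  have "x * x * 13824 \<le> x * x * x"
    using assms by (intro mult_left_mono) auto
  then have "x * x \<le> (x / 24) ^ 3"
    by (simp add: power3_eq_cube)
  also have "\<dots> \<le> exp ((x - 1) / 24) ^ 3"
  proof (rule power_mono)
    have "x / 24 \<le> 1 + (x - 1) / 24"
      by (simp add: field_simps)
    also have "\<dots> \<le> exp ((x - 1) / 24)"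
      by (rule exp_ge_add_one_self)
    finally show "x / 24 \<le> exp ((x - 1) / 24)" .
  qed (use assms in simp)
  also have "\<dots> = exp ((x - 1) / 8)"
    by (simp add: exp_of_nat_mult[symmetric])
  finally show ?thesis .
qed

lemma U_space_good_event:
  assumes m: "m \<ge> 13824"
  obtains E where "E \<in> sets (U_space m)" "1 - 1 / real m \<le> measure (U_space m) E"
    "\<And>u. u \<in> E \<Longrightarrow> \<forall>p\<in>offdiag m. u p \<in> {0..1}"
    "\<And>u i. u \<in> E \<Longrightarrow> i < m \<Longrightarrow> (real m - 1) / 4 \<le> (\<Sum>j\<in>{..<m} - {i}. u (i, j))"
proof -
  interpret prob_space "U_space m"
    unfolding U_space_def by (intro prob_space_PiM prob_space_uniform_measure) auto
  have component [measurable]: "(\<lambda>x. x p) \<in> borel_measurable (U_space m)" if "p \<in> offdiag m" for p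
    using that unfolding U_space_def
    by (subst measurable_cong_sets[OF sets_PiM_cong refl]) (auto intro: measurable_component_singleton)
  define outside where "outside p = {x \<in> space (U_space m). x p \<notin> {0..1}}" for p
  define small_row where
    "small_row i = {x \<in> space (U_space m). (\<Sum>j\<in>{..<m} - {i}. x (i, j)) \<le> (real m - 1) / 4}" for i
  define E where "E = space (U_space m) - (\<Union>i<m. small_row i) - (\<Union>p\<in>offdiag m. outside p)"
  have outside_null: "outside p \<in> null_sets (U_space m)" if p: "p \<in> offdiag m" for p
  proof -
    have "AE x in U_space m. x p \<in> {0..1}"
      using p unfolding U_space_def
      by (intro AE_PiM_component AE_uniform_measureI prob_space_uniform_measure) auto
    moreover have "outside p \<in> sets (U_space m)"
      using p unfolding outside_def by measurable
    ultimately show ?thesis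
      using AE_iff_null[of "U_space m" "\<lambda>x. x p \<in> {0..1}"] unfolding outside_def by blast
  qed
  have finite_offdiag: "finite (offdiag m)"
    by (rule finite_subset[of _ "{..<m} \<times> {..<m}"]) (auto simp: offdiag_def)
  have small_row_sets: "small_row i \<in> sets (U_space m)" if "i < m" for i
  proof -
    have [measurable]: "(\<lambda>x. \<Sum>j\<in>{..<m} - {i}. x (i, j)) \<in> borel_measurable (U_space m)"
      using that by (intro borel_measurable_sum component) (auto simp: offdiag_def)
    show ?thesis
      unfolding small_row_def by measurable
  qed
  have "prob (\<Union>i<m. small_row i) \<le> (\<Sum>i<m. prob (small_row i))"
    using small_row_sets by (intro measure_UNION_le) auto
  also have "\<dots> \<le> (\<Sum>i<m. exp (- (real m - 1) / 8))"
    using m unfolding small_row_def by (intro sum_mono U_space_row_lower_tail) auto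
  also have "\<dots> \<le> 1 / real m"
  proof -
    have "exp (- (real m - 1) / 8) = 1 / exp ((real m - 1) / 8)"
      by (metis exp_minus inverse_eq_divide minus_divide_left)
    then have "real m * exp (- (real m - 1) / 8) * real m = real m * real m / exp ((real m - 1) / 8)"
      by simp
    also have "\<dots> \<le> 1"
      using square_le_exp_eighth[of "real m"] m by simp
    finally show ?thesis
      using m by (simp add: field_simps)
  qed
  finally have small: "prob (\<Union>i<m. small_row i) \<le> 1 / real m" .
  have rows_sets: "(\<Union>i<m. small_row i) \<in> sets (U_space m)"
    using small_row_sets by (intro sets.finite_UN) auto
  have outside_union_null: "(\<Union>p\<in>offdiag m. outside p) \<in> null_sets (U_space m)"
    using finite_offdiag outside_null by (intro null_sets.finite_UN) auto
  have "prob E = prob (space (U_space m) - (\<Union>i<m. small_row i))"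
    unfolding E_def using rows_sets outside_union_null by (intro measure_Diff_null_set) auto
  also have "\<dots> = 1 - prob (\<Union>i<m. small_row i)"
    using rows_sets by (rule prob_compl)
  finally have "1 - 1 / real m \<le> prob E"
    using small by simp
  moreover have "E \<in> sets (U_space m)"
    unfolding E_def using rows_sets null_setsD2[OF outside_union_null] by auto
  moreover have "\<forall>p\<in>offdiag m. u p \<in> {0..1}" if "u \<in> E" for u
    using that by (auto simp: E_def outside_def)
  moreover have "(real m - 1) / 4 \<le> (\<Sum>j\<in>{..<m} - {i}. u (i, j))" if "u \<in> E" "i < m" for u i
    using that by (force simp: E_def small_row_def)
  ultimately show ?thesis
    using that by blast
qed

lemma B_tilde_row_sum:
  assumes "i < m"
  shows "(\<Sum>j<m. B_tilde m u i j) = 1 + (\<Sum>j\<in>{..<m} - {i}. u (i, j)) / sqrt (real m)"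
proof -
  have "(\<Sum>j\<in>{..<m} - {i}. B_tilde m u i j) = (\<Sum>j\<in>{..<m} - {i}. u (i, j) / sqrt (real m))"
    by (rule sum.cong) (auto simp: B_tilde_def)
  then show ?thesis
    using assms by (simp add: sum.remove[of "{..<m}" i] B_tilde_def sum_divide_distrib)
qed

lemma B_tilde_z_Aff_ge_sqrt_mult_z_AR:
  assumes m: "m \<ge> 2"
    and unit: "\<forall>p\<in>offdiag m. u p \<in> {0..1}"
    and rows: "\<And>i. i < m \<Longrightarrow> (real m - 1) / 4 \<le> (\<Sum>j\<in>{..<m} - {i}. u (i, j))"
  shows "ereal (sqrt (real m) / 24) * z_AR m m (\<lambda>_ _. 0) (B_tilde m u) (\<lambda>_. 0) (\<lambda>_. 1) (U3 m)
    \<le> z_Aff m m (\<lambda>_ _. 0) (B_tilde m u) (\<lambda>_. 0) (\<lambda>_. 1) (U3 m)"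
proof (rule z_Aff_ge_sqrt_mult_z_AR[OF m])
  have entry: "0 \<le> u (i, j)" "u (i, j) \<le> 1" if "i < m" "j < m" "i \<noteq> j" for i j
    using unit that by (auto simp: offdiag_def)
  show "B_tilde m u i i = 1" for i
    by (simp add: B_tilde_def)
  show "0 \<le> B_tilde m u i j" if "i < m" "j < m" for i j
    using entry[OF that] by (simp add: B_tilde_def)
  show "B_tilde m u i j \<le> 1 / sqrt (real m)" if "i < m" "j < m" "i \<noteq> j" for i j
    using entry[OF that] that(3) by (simp add: B_tilde_def divide_right_mono)
  show "(real m - 1) / (4 * sqrt (real m)) \<le> (\<Sum>j<m. B_tilde m u i j)" if i: "i < m" for i
  proof -
    have "(real m - 1) / (4 * sqrt (real m)) \<le> (\<Sum>j\<in>{..<m} - {i}. u (i, j)) / sqrt (real m)"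
      using divide_right_mono[OF rows[OF i], of "sqrt (real m)"] by simp
    then show ?thesis
      using i by (simp add: B_tilde_row_sum)
  qed
qed

theorem theorem3:
  "\<exists>C::real. C > 0 \<and> (\<exists>m0::nat. \<forall>m::nat. m \<ge> 1 \<and> m \<ge> m0 \<longrightarrow>
     (\<exists>E \<in> sets (U_space m). measure (U_space m) E \<ge> 1 - 1 / real m \<and>
        (\<forall>u \<in> E.
           z_Aff m m (\<lambda>_ _. 0) (B_tilde m u) (\<lambda>_. 0) (\<lambda>_. 1) (U3 m)
             \<ge> ereal (C * sqrt (real m)) *
               z_AR m m (\<lambda>_ _. 0) (B_tilde m u) (\<lambda>_. 0) (\<lambda>_. 1) (U3 m))))"
proof (intro exI[of _ "1 / 24"] conjI exI[of _ 13824] allI impI)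
  fix m :: nat
  assume "1 \<le> m \<and> 13824 \<le> m"
  then have m: "m \<ge> 13824"
    by simp
  obtain E where E: "E \<in> sets (U_space m)" "1 - 1 / real m \<le> measure (U_space m) E"
    and unit: "\<And>u. u \<in> E \<Longrightarrow> \<forall>p\<in>offdiag m. u p \<in> {0..1}"
    and rows: "\<And>u i. u \<in> E \<Longrightarrow> i < m \<Longrightarrow> (real m - 1) / 4 \<le> (\<Sum>j\<in>{..<m} - {i}. u (i, j))"
    using U_space_good_event[OF m] by blast
  have "ereal (1 / 24 * sqrt (real m)) * z_AR m m (\<lambda>_ _. 0) (B_tilde m u) (\<lambda>_. 0) (\<lambda>_. 1) (U3 m)
      \<le> z_Aff m m (\<lambda>_ _. 0) (B_tilde m u) (\<lambda>_. 0) (\<lambda>_. 1) (U3 m)" if "u \<in> E" for u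
    using B_tilde_z_Aff_ge_sqrt_mult_z_AR[of m u] m unit[OF that] rows[OF that] by simp
  then show "\<exists>E \<in> sets (U_space m). measure (U_space m) E \<ge> 1 - 1 / real m \<and>
      (\<forall>u \<in> E. z_Aff m m (\<lambda>_ _. 0) (B_tilde m u) (\<lambda>_. 0) (\<lambda>_. 1) (U3 m)
        \<ge> ereal (1 / 24 * sqrt (real m)) * z_AR m m (\<lambda>_ _. 0) (B_tilde m u) (\<lambda>_. 0) (\<lambda>_. 1) (U3 m))"
    using E by blast
qed simp

end
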